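(* Let $m>1$. Suppose that the $\mathbb{G}^{*m-1}$-optional splitting formula holds at times $\tau_1,\ldots,\tau_{m-1}$ with respect to $\mathbb{F}$, and that the optional splitting formula holds at the marked time $(\xi_m,\tau_m)$ with respect to $\mathbb{G}^{*m-1}$, i.e. for every $\mathbb{G}^{*m}$-optional process $Y$ there exist $Y'\in\mathcal{O}(\mathbb{G}^{*m-1})$ and a $\mathcal{D}\otimes\mathcal{O}(\mathbb{G}^{*m-1})$-measurable function $Y''$ on $\mathfrak{D}(E)\times(\mathbb{R}_+\times\Omega)$ with $Y=Y'\mathbf{1}_{[0,\tau_m)}+Y''(H_m)\mathbf{1}_{[\tau_m,\infty)}$. Then the $\mathbb{G}^{*m}$-optional splitting formula holds at times $\tau_1,\ldots,\tau_m$ with respect to $\mathbb{F}$.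
   Context: Let $(\Omega,\mathcal{A},\mathbb{Q})$ be a probability space with a right-continuous filtration $\mathbb{F}=(\mathcal{F}_t)_{t\ge0}$ such that $\mathcal{F}_0$ contains $\mathcal{N}^{\mathcal{F}_\infty}$, where for a $\sigma$-algebra $\mathcal{T}\subset\mathcal{A}$, $\mathcal{N}^{\mathcal{T}}$ denotes the $\sigma$-algebra generated by all subsets of $\mathcal{T}$-measurable $\mathbb{Q}$-null sets. Let $(E,\mathcal{E})$ be a separable complete metric space with its Borel $\sigma$-algebra, $\Delta\in E$, $E^\circ=E\setminus\{\Delta\}$. Let $\tau_1,\ldots,\tau_m$ be $[0,\infty]$-valued random variables and $\xi_1,\ldots,\xi_m$ be $E^\circ$-valued random variables. Define $H_i(t)=\Delta$ if $t<\tau_i$ and $H_i(t)=\xi_i$ if $\tau_i\le t$ ($t\ge0$). For $1\le k\le m$, $\mathcal{H}^{k}_t=\sigma(H_i(s):1\le i\le k,0\le s\le t)$, $\mathcal{N}^{*k}=\mathcal{N}^{\mathcal{H}^k_\infty\vee\mathcal{F}_\infty}$, and $\mathcal{G}^{*k}_t=\mathcal{N}^{*k}\vee\bigcap_{s>t}(\mathcal{F}_s\vee\mathcal{H}^k_s)$, defining the filtration $\mathbb{G}^{*k}$. $\mathfrak{D}(E)$ is the space of càdlàg $E$-valued functions on $\mathbb{R}_+$ with the Skorokhod topology and Borel $\sigma$-algebra $\mathcal{D}$. $\sigma_{k,1}\le\cdots\le\sigma_{k,k}$ denotes the increasing reordering of $\tau_1,\ldots,\tau_k$, with $\sigma_{k,0}=0$,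 $\sigma_{k,k+1}=\infty$; $H_i^{R}$ denotes $H_i$ stopped at $R$. For a function $Z$ on $F\times(\mathbb{R}_+\times\Omega)$ and a random element $\Upsilon$ of $F$, $Z(\Upsilon)(t,\omega)=Z(\Upsilon(\omega),t,\omega)$. The $\mathbb{G}^{*k}$-optional splitting formula holds at times $\tau_1,\ldots,\tau_k$ with respect to $\mathbb{F}$ if for every $\mathbb{G}^{*k}$-optional $Y$ there exist $\mathcal{D}^{k}\otimes\mathcal{O}(\mathbb{F})$-measurable functions $Y^{(0)},\ldots,Y^{(k)}$ on $\mathfrak{D}(E)^k\times(\mathbb{R}_+\times\Omega)$ with $Y=\sum_{i=0}^kY^{(i)}(H_1^{\sigma_{k,i}},\ldots,H_k^{\sigma_{k,i}})\mathbf{1}_{[\sigma_{k,i},\sigma_{k,i+1})}$ up to indistinguishability outside a null set of $\mathcal{N}^{*k}$. *)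

theory Defs
  imports "HOL-Probability.Probability"
begin

definition cadlag_Rplus :: "(real \<Rightarrow> 'b::topological_space) \<Rightarrow> bool" where
  "cadlag_Rplus f \<longleftrightarrow> (\<forall>t\<ge>0. continuous (at_right t) f) \<and> (\<forall>t>0. \<exists>l. (f \<longlongrightarrow> l) (at_left t))"

section \<open>Skorokhod space D(E) with the Skorokhod (J1) metric of Ethier-Kurtz (3.5.2)\<close>

definition skor_Lambda :: "(real \<Rightarrow> real) set" where
  "skor_Lambda = {l. strict_mono_on {0..} l \<and> l ` {0..} = {0..} \<and> (\<exists>C. C-lipschitz_on {0..} l)
      \<and> bdd_above {\<bar>ln ((l s - l t) / (s - t))\<bar> | s t. 0 \<le> t \<and> t < s}}"

definition skor_gamma :: "(real \<Rightarrow> real) \<Rightarrow> real" where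
  "skor_gamma l = Sup {\<bar>ln ((l s - l t) / (s - t))\<bar> | s t. 0 \<le> t \<and> t < s}"

definition skor_du :: "(real \<Rightarrow> 'e::metric_space) \<Rightarrow> (real \<Rightarrow> 'e) \<Rightarrow> (real \<Rightarrow> real) \<Rightarrow> real \<Rightarrow> real" where
  "skor_du x y l u = Sup {min (dist (x (min t u)) (y (min (l t) u))) 1 | t. 0 \<le> t}"

definition skor_dist :: "(real \<Rightarrow> 'e::metric_space) \<Rightarrow> (real \<Rightarrow> 'e) \<Rightarrow> real" where
  "skor_dist x y = Inf {max (skor_gamma l)
      (enn2real (\<integral>\<^sup>+ u. ennreal (exp (- u) * skor_du x y l u) * indicator {0..} u \<partial>lborel)) | l. l \<in> skor_Lambda}"

text \<open>Cadlag E-valued paths on R_+; we extend them to negative times by the constant Delta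
  (the processes H_i below take the value Delta before time 0 anyway).\<close>
definition Dspace :: "'e::metric_space \<Rightarrow> (real \<Rightarrow> 'e) set" where
  "Dspace \<Delta> = {x. cadlag_Rplus x \<and> (\<forall>t<0. x t = \<Delta>)}"

definition Dmeas :: "'e::metric_space \<Rightarrow> (real \<Rightarrow> 'e) measure" where
  "Dmeas \<Delta> = sigma (Dspace \<Delta>)
     {U. U \<subseteq> Dspace \<Delta> \<and> (\<forall>x\<in>U. \<exists>e>0. \<forall>y\<in>Dspace \<Delta>. skor_dist x y < e \<longrightarrow> y \<in> U)}"

definition nullsig :: "'a measure \<Rightarrow> 'a set set \<Rightarrow> 'a set set" where
  "nullsig Q T = sigma_sets (space Q) {N. N \<subseteq> space Q \<and> (\<exists>B\<in>T. B \<in> sets Q \<and> emeasure Q B = 0 \<and> N \<subseteq> B)}"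

definition Finf :: "'a set \<Rightarrow> (real \<Rightarrow> 'a set set) \<Rightarrow> 'a set set" where
  "Finf \<Omega> F = sigma_sets \<Omega> (\<Union>t\<in>{0..}. F t)"

definition Hproc :: "'e \<Rightarrow> (nat \<Rightarrow> 'a \<Rightarrow> ereal) \<Rightarrow> (nat \<Rightarrow> 'a \<Rightarrow> 'e) \<Rightarrow> nat \<Rightarrow> 'a \<Rightarrow> real \<Rightarrow> 'e" where
  "Hproc \<Delta> \<tau> \<xi> i \<omega> t = (if ereal t < \<tau> i \<omega> then \<Delta> else \<xi> i \<omega>)"

definition Hsig :: "'a set \<Rightarrow> 'e::topological_space \<Rightarrow> (nat \<Rightarrow> 'a \<Rightarrow> ereal) \<Rightarrow> (nat \<Rightarrow> 'a \<Rightarrow> 'e)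
    \<Rightarrow> nat \<Rightarrow> ereal \<Rightarrow> 'a set set" where
  "Hsig \<Omega> \<Delta> \<tau> \<xi> k t = sigma_sets \<Omega>
     {{\<omega>\<in>\<Omega>. Hproc \<Delta> \<tau> \<xi> i \<omega> s \<in> B} | i s B. 1 \<le> i \<and> i \<le> k \<and> 0 \<le> s \<and> ereal s \<le> t \<and> B \<in> sets borel}"

definition Nstar :: "'a measure \<Rightarrow> (real \<Rightarrow> 'a set set) \<Rightarrow> 'e::topological_space \<Rightarrow> (nat \<Rightarrow> 'a \<Rightarrow> ereal)
    \<Rightarrow> (nat \<Rightarrow> 'a \<Rightarrow> 'e) \<Rightarrow> nat \<Rightarrow> 'a set set" where
  "Nstar Q F \<Delta> \<tau> \<xi> k = nullsig Q (sigma_sets (space Q) (Hsig (space Q) \<Delta> \<tau> \<xi> k \<infinity> \<union> Finf (space Q) F))"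

definition Gstar :: "'a measure \<Rightarrow> (real \<Rightarrow> 'a set set) \<Rightarrow> 'e::topological_space \<Rightarrow> (nat \<Rightarrow> 'a \<Rightarrow> ereal)
    \<Rightarrow> (nat \<Rightarrow> 'a \<Rightarrow> 'e) \<Rightarrow> nat \<Rightarrow> real \<Rightarrow> 'a set set" where
  "Gstar Q F \<Delta> \<tau> \<xi> k t = sigma_sets (space Q)
     (Nstar Q F \<Delta> \<tau> \<xi> k \<union> (\<Inter>s\<in>{t<..}. sigma_sets (space Q) (F s \<union> Hsig (space Q) \<Delta> \<tau> \<xi> k (ereal s))))"

definition cadlag_adapted :: "'a set \<Rightarrow> (real \<Rightarrow> 'a set set) \<Rightarrow> (real \<times> 'a \<Rightarrow> real) \<Rightarrow> bool" where
  "cadlag_adapted \<Omega> G X \<longleftrightarrow> (\<forall>\<omega>\<in>\<Omega>. cadlag_Rplus (\<lambda>t. X (t, \<omega>)))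
     \<and> (\<forall>t\<ge>0. \<forall>B\<in>sets borel. {\<omega>\<in>\<Omega>. X (t, \<omega>) \<in> B} \<in> G t)"

definition Opt :: "'a set \<Rightarrow> (real \<Rightarrow> 'a set set) \<Rightarrow> (real \<times> 'a) measure" where
  "Opt \<Omega> G = sigma ({0..} \<times> \<Omega>)
     {{p \<in> {0..} \<times> \<Omega>. X p \<in> B} | X B. cadlag_adapted \<Omega> G X \<and> B \<in> sets borel}"

definition sig_ord :: "(nat \<Rightarrow> 'a \<Rightarrow> ereal) \<Rightarrow> nat \<Rightarrow> nat \<Rightarrow> 'a \<Rightarrow> ereal" where
  "sig_ord \<tau> k i \<omega> = (if i = 0 then 0
      else if i \<le> k then sort (map (\<lambda>j. \<tau> j \<omega>) [1..<Suc k]) ! (i - 1) else \<infinity>)"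

definition Hstop :: "'e \<Rightarrow> (nat \<Rightarrow> 'a \<Rightarrow> ereal) \<Rightarrow> (nat \<Rightarrow> 'a \<Rightarrow> 'e) \<Rightarrow> nat \<Rightarrow> ereal \<Rightarrow> 'a \<Rightarrow> real \<Rightarrow> 'e" where
  "Hstop \<Delta> \<tau> \<xi> i R \<omega> t = (if ereal t \<le> R then Hproc \<Delta> \<tau> \<xi> i \<omega> t else Hproc \<Delta> \<tau> \<xi> i \<omega> (real_of_ereal R))"

definition opt_split :: "'a measure \<Rightarrow> (real \<Rightarrow> 'a set set) \<Rightarrow> 'e::metric_space \<Rightarrow> (nat \<Rightarrow> 'a \<Rightarrow> ereal)
    \<Rightarrow> (nat \<Rightarrow> 'a \<Rightarrow> 'e) \<Rightarrow> nat \<Rightarrow> bool" where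
  "opt_split Q F \<Delta> \<tau> \<xi> k \<longleftrightarrow>
    (\<forall>Y :: real \<times> 'a \<Rightarrow> real. Y \<in> borel_measurable (Opt (space Q) (Gstar Q F \<Delta> \<tau> \<xi> k)) \<longrightarrow>
       (\<exists>Ys :: nat \<Rightarrow> (nat \<Rightarrow> real \<Rightarrow> 'e) \<times> (real \<times> 'a) \<Rightarrow> real.
         (\<forall>i\<le>k. Ys i \<in> borel_measurable (PiM {1..k} (\<lambda>_. Dmeas \<Delta>) \<Otimes>\<^sub>M Opt (space Q) F)) \<and>
         (\<exists>N \<in> Nstar Q F \<Delta> \<tau> \<xi> k.
            (\<exists>B \<in> sigma_sets (space Q) (Hsig (space Q) \<Delta> \<tau> \<xi> k \<infinity> \<union> Finf (space Q) F).
                B \<in> sets Q \<and> emeasure Q B = 0 \<and> N \<subseteq> B) \<and>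
            (\<forall>\<omega> \<in> space Q - N. \<forall>t\<ge>0.
               Y (t, \<omega>) = (\<Sum>i\<le>k. Ys i (restrict (\<lambda>j. Hstop \<Delta> \<tau> \<xi> j (sig_ord \<tau> k i \<omega>) \<omega>) {1..k}, (t, \<omega>))
                   * (if sig_ord \<tau> k i \<omega> \<le> ereal t \<and> ereal t < sig_ord \<tau> k (Suc i) \<omega> then 1 else 0))))))"

definition opt_split_marked :: "'a measure \<Rightarrow> (real \<Rightarrow> 'a set set) \<Rightarrow> 'e::metric_space \<Rightarrow> (nat \<Rightarrow> 'a \<Rightarrow> ereal)
    \<Rightarrow> (nat \<Rightarrow> 'a \<Rightarrow> 'e) \<Rightarrow> nat \<Rightarrow> bool" where
  "opt_split_marked Q F \<Delta> \<tau> \<xi> m \<longleftrightarrow>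
    (\<forall>Y :: real \<times> 'a \<Rightarrow> real. Y \<in> borel_measurable (Opt (space Q) (Gstar Q F \<Delta> \<tau> \<xi> m)) \<longrightarrow>
       (\<exists>Y' \<in> borel_measurable (Opt (space Q) (Gstar Q F \<Delta> \<tau> \<xi> (m - 1))).
       \<exists>Y'' \<in> borel_measurable (Dmeas \<Delta> \<Otimes>\<^sub>M Opt (space Q) (Gstar Q F \<Delta> \<tau> \<xi> (m - 1))).
         \<forall>\<omega>\<in>space Q. \<forall>t\<ge>0.
           Y (t, \<omega>) = Y' (t, \<omega>) * (if ereal t < \<tau> m \<omega> then 1 else 0)
                      + Y'' (Hproc \<Delta> \<tau> \<xi> m \<omega>, (t, \<omega>)) * (if \<tau> m \<omega> \<le> ereal t then 1 else 0)))"

end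

theory Submission
  imports Defs
begin

(* A G^{*m}-optional process Y splits at tau_m into a G^{*(m-1)}-optional process Y', used
   before tau_m, and Y''(H_m), used afterwards. The splitting formula at level m-1 applies to Y'
   directly; extended by a monotone class argument from optional processes to measurable
   functions of an additional path x, it also splits Y''(x, .) with a single null set for all x,
   after which x can be replaced by H_m.
   On [sigma_{m,i}, sigma_{m,i+1}) the first m-1 processes stopped at sigma_{m,i} agree with those
   stopped at sigma_{m-1,j}, where j = i or j = i - 1 according as tau_m has not or has occurred.
   Which case applies is read off from H_m stopped at sigma_{m,i} being the constant path Delta,
   a measurable event since every other path has positive Skorokhod distance from it. *)

definition sig_interval :: "(nat \<Rightarrow> 'a \<Rightarrow> ereal) \<Rightarrow> nat \<Rightarrow> nat \<Rightarrow> 'a \<Rightarrow> real \<Rightarrow> bool" where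
  "sig_interval \<tau> k i \<omega> t \<longleftrightarrow> sig_ord \<tau> k i \<omega> \<le> ereal t \<and> ereal t < sig_ord \<tau> k (Suc i) \<omega>"

definition count_le :: "(nat \<Rightarrow> 'a \<Rightarrow> ereal) \<Rightarrow> nat \<Rightarrow> 'a \<Rightarrow> real \<Rightarrow> nat" where
  "count_le \<tau> k \<omega> t = length (filter (\<lambda>x. x \<le> ereal t) (map (\<lambda>j. \<tau> j \<omega>) [1..<Suc k]))"

lemma count_le_Suc:
  "count_le \<tau> (Suc k) \<omega> t = count_le \<tau> k \<omega> t + (if \<tau> (Suc k) \<omega> \<le> ereal t then 1 else 0)"
  by (simp add: count_le_def)

lemma sig_ord_nonneg:
  assumes "\<forall>l\<in>{1..k}. 0 \<le> \<tau> l \<omega>"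
  shows "0 \<le> sig_ord \<tau> k i \<omega>"
proof -
  have "0 \<le> sort (map (\<lambda>j. \<tau> j \<omega>) [1..<Suc k]) ! (i - 1)" if "1 \<le> i" "i \<le> k"
  proof -
    have "sort (map (\<lambda>j. \<tau> j \<omega>) [1..<Suc k]) ! (i - 1) \<in> set (map (\<lambda>j. \<tau> j \<omega>) [1..<Suc k])"
      using that by (metis length_map length_sort length_upt diff_Suc_1 diff_less_mono
          less_Suc_eq_le nth_mem set_sort)
    then show ?thesis using assms by (auto simp del: upt_Suc)
  qed
  then show ?thesis by (auto simp: sig_ord_def)
qed

lemma sig_interval_le_iff:
  assumes int: "sig_interval \<tau> k i \<omega> t" and "i \<le> k" and l: "l \<in> {1..k}"
  shows "\<tau> l \<omega> \<le> sig_ord \<tau> k i \<omega> \<longleftrightarrow> \<tau> l \<omega> \<le> ereal t"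
proof
  assume "\<tau> l \<omega> \<le> sig_ord \<tau> k i \<omega>"
  then show "\<tau> l \<omega> \<le> ereal t" using int unfolding sig_interval_def by auto
next
  assume le: "\<tau> l \<omega> \<le> ereal t"
  let ?L = "sort (map (\<lambda>j. \<tau> j \<omega>) [1..<Suc k])"
  have "\<tau> l \<omega> \<in> set ?L" using l by (auto simp del: upt_Suc)
  then obtain p where "p < length ?L" "?L ! p = \<tau> l \<omega>" by (meson in_set_conv_nth)
  then have p: "p < k" "?L ! p = \<tau> l \<omega>" by (simp_all del: upt_Suc)
  show "\<tau> l \<omega> \<le> sig_ord \<tau> k i \<omega>"
  proof (cases "p < i")
    case True
    then have "?L ! p \<le> ?L ! (i - 1)" using \<open>i \<le> k\<close> by (intro sorted_nth_mono) auto
    then show ?thesis using True \<open>i \<le> k\<close> p by (simp add: sig_ord_def)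
  next
    case False
    then have "?L ! i \<le> ?L ! p" using p by (intro sorted_nth_mono) (auto simp del: upt_Suc)
    moreover have "sig_ord \<tau> k (Suc i) \<omega> = ?L ! i" using False p by (simp add: sig_ord_def del: upt_Suc)
    ultimately have "sig_ord \<tau> k (Suc i) \<omega> \<le> \<tau> l \<omega>" using p by simp
    then show ?thesis using int le unfolding sig_interval_def by auto
  qed
qed

lemma length_filter_prefix:
  assumes "j \<le> length xs" "\<And>p. p < j \<Longrightarrow> P (xs ! p)"
    and "\<And>p. j \<le> p \<Longrightarrow> p < length xs \<Longrightarrow> \<not> P (xs ! p)"
  shows "length (filter P xs) = j"
proof -
  have "filter P (take j xs) = take j xs"
    using assms(2) by (auto simp: filter_id_conv in_set_conv_nth)
  moreover have "filter P (drop j xs) = []"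
    using assms(3) by (auto simp: filter_empty_conv in_set_conv_nth)
  ultimately show ?thesis
    using assms(1) by (metis append_take_drop_id filter_append length_append length_take
        list.size(3) add_0_right min_absorb2)
qed

lemma sig_interval_index:
  assumes "sig_interval \<tau> k i \<omega> t" and "i \<le> k"
  shows "i = count_le \<tau> k \<omega> t"
proof -
  let ?L = "sort (map (\<lambda>j. \<tau> j \<omega>) [1..<Suc k])"
  have "length (filter (\<lambda>x. x \<le> ereal t) ?L) = i"
  proof (rule length_filter_prefix)
    fix p assume "p < i"
    then have "?L ! p \<le> ?L ! (i - 1)" using \<open>i \<le> k\<close> by (intro sorted_nth_mono) auto
    then show "?L ! p \<le> ereal t"
      using assms \<open>p < i\<close> unfolding sig_interval_def by (auto simp: sig_ord_def simp del: upt_Suc)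
  next
    fix p assume "i \<le> p" "p < length ?L"
    then have "?L ! i \<le> ?L ! p" by (intro sorted_nth_mono) auto
    then show "\<not> ?L ! p \<le> ereal t"
      using assms \<open>i \<le> p\<close> \<open>p < length ?L\<close>
      unfolding sig_interval_def by (auto simp: sig_ord_def simp del: upt_Suc)
  qed (use \<open>i \<le> k\<close> in simp)
  then show ?thesis by (simp add: count_le_def filter_sort del: upt_Suc)
qed

lemma sig_interval_exists:
  assumes "0 \<le> t"
  shows "\<exists>i\<le>k. sig_interval \<tau> k i \<omega> t"
proof -
  define I where "I = {i. i \<le> k \<and> sig_ord \<tau> k i \<omega> \<le> ereal t}"
  have "finite I" "0 \<in> I" using assms by (simp_all add: I_def sig_ord_def)
  then have "Max I \<in> I" by (intro Max_in) auto
  moreover have "ereal t < sig_ord \<tau> k (Suc (Max I)) \<omega>"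
  proof (cases "Suc (Max I) \<le> k")
    case True
    then have "Suc (Max I) \<notin> I" using Max_ge[OF \<open>finite I\<close>, of "Suc (Max I)"] by auto
    then show ?thesis using True by (auto simp: I_def)
  qed (simp add: sig_ord_def)
  ultimately show ?thesis unfolding I_def sig_interval_def by blast
qed

lemma sum_sig_interval_iff:
  fixes f :: "nat \<Rightarrow> real"
  assumes "0 \<le> t"
  shows "y = (\<Sum>i\<le>k. f i * (if sig_ord \<tau> k i \<omega> \<le> ereal t \<and> ereal t < sig_ord \<tau> k (Suc i) \<omega> then 1 else 0))
    \<longleftrightarrow> (\<forall>i\<le>k. sig_interval \<tau> k i \<omega> t \<longrightarrow> y = f i)"
proof -
  obtain i where i: "i \<le> k" "sig_interval \<tau> k i \<omega> t"
    using sig_interval_exists[OF assms, where k = k and \<tau> = \<tau> and \<omega> = \<omega>] by blast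
  have unique: "j = i" if "j \<le> k" "sig_interval \<tau> k j \<omega> t" for j
    using sig_interval_index[OF i(2,1)] sig_interval_index[OF that(2,1)] by simp
  have "(\<Sum>j\<le>k. f j * (if sig_ord \<tau> k j \<omega> \<le> ereal t \<and> ereal t < sig_ord \<tau> k (Suc j) \<omega> then 1 else 0))
      = (\<Sum>j\<le>k. if j = i then f j else 0)"
  proof (rule sum.cong)
    fix j assume "j \<in> {..k}"
    then show "f j * (if sig_ord \<tau> k j \<omega> \<le> ereal t \<and> ereal t < sig_ord \<tau> k (Suc j) \<omega> then 1 else 0)
        = (if j = i then f j else 0)"
      using unique[of j] i(2) unfolding sig_interval_def by (cases "j = i") auto
  qed simp
  also have "\<dots> = f i" using i(1) by simp
  finally show ?thesis using i unique by metis
qed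

lemma Hproc_eq: "Hproc \<Delta> \<tau> \<xi> l \<omega> = (\<lambda>s. if \<tau> l \<omega> \<le> ereal s then \<xi> l \<omega> else \<Delta>)"
  by (auto simp: Hproc_def not_less fun_eq_iff)

lemma Hstop_eq:
  assumes "R \<noteq> -\<infinity>"
  shows "Hstop \<Delta> \<tau> \<xi> l R \<omega> = (\<lambda>s. if \<tau> l \<omega> \<le> R \<and> \<tau> l \<omega> \<le> ereal s then \<xi> l \<omega> else \<Delta>)"
proof
  fix s
  show "Hstop \<Delta> \<tau> \<xi> l R \<omega> s = (if \<tau> l \<omega> \<le> R \<and> \<tau> l \<omega> \<le> ereal s then \<xi> l \<omega> else \<Delta>)"
  proof (cases R)
    case (real r)
    then show ?thesis
      by (cases "s \<le> r") (auto simp: Hstop_def Hproc_def not_less intro: order_trans)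
  qed (use assms in \<open>auto simp: Hstop_def Hproc_def not_less\<close>)
qed

definition stopped_paths :: "'e \<Rightarrow> (nat \<Rightarrow> 'a \<Rightarrow> ereal) \<Rightarrow> (nat \<Rightarrow> 'a \<Rightarrow> 'e) \<Rightarrow> nat \<Rightarrow> ereal \<Rightarrow> 'a
    \<Rightarrow> nat \<Rightarrow> real \<Rightarrow> 'e" where
  "stopped_paths \<Delta> \<tau> \<xi> k R \<omega> = restrict (\<lambda>j. Hstop \<Delta> \<tau> \<xi> j R \<omega>) {1..k}"

lemma stopped_paths_sig_ord:
  assumes nn: "\<forall>l\<in>{1..k}. 0 \<le> \<tau> l \<omega>" and int: "sig_interval \<tau> k i \<omega> t" "i \<le> k"
  shows "stopped_paths \<Delta> \<tau> \<xi> k (sig_ord \<tau> k i \<omega>) \<omega> = stopped_paths \<Delta> \<tau> \<xi> k (ereal t) \<omega>"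
proof -
  have "sig_ord \<tau> k i \<omega> \<noteq> -\<infinity>"
    using sig_ord_nonneg[where \<tau> = \<tau> and k = k and \<omega> = \<omega>, OF nn] by auto
  then show ?thesis
    using sig_interval_le_iff[OF int] by (auto simp: stopped_paths_def Hstop_eq fun_eq_iff)
qed

definition split_null :: "'a measure \<Rightarrow> (real \<Rightarrow> 'a set set) \<Rightarrow> 'e::topological_space \<Rightarrow> (nat \<Rightarrow> 'a \<Rightarrow> ereal)
    \<Rightarrow> (nat \<Rightarrow> 'a \<Rightarrow> 'e) \<Rightarrow> nat \<Rightarrow> 'a set \<Rightarrow> bool" where
  "split_null Q F \<Delta> \<tau> \<xi> k N \<longleftrightarrow> N \<in> Nstar Q F \<Delta> \<tau> \<xi> k \<and>
     (\<exists>B \<in> sigma_sets (space Q) (Hsig (space Q) \<Delta> \<tau> \<xi> k \<infinity> \<union> Finf (space Q) F).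
        B \<in> sets Q \<and> emeasure Q B = 0 \<and> N \<subseteq> B)"

lemma split_null_UN:
  assumes "\<And>n::nat. split_null Q F \<Delta> \<tau> \<xi> k (N n)"
  shows "split_null Q F \<Delta> \<tau> \<xi> k (\<Union>n. N n)"
proof -
  let ?S = "sigma_sets (space Q) (Hsig (space Q) \<Delta> \<tau> \<xi> k \<infinity> \<union> Finf (space Q) F)"
  obtain B where B: "\<And>n. B n \<in> ?S" "\<And>n. B n \<in> sets Q" "\<And>n. emeasure Q (B n) = 0" "\<And>n. N n \<subseteq> B n"
    using assms unfolding split_null_def by metis
  have "(\<Union>n. N n) \<in> Nstar Q F \<Delta> \<tau> \<xi> k"
    using assms unfolding split_null_def Nstar_def nullsig_def by (intro sigma_sets.Union) auto
  moreover have "(\<Union>n. B n) \<in> ?S" using B(1) by (rule sigma_sets.Union)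
  moreover have "emeasure Q (\<Union>n. B n) = 0" using B(2,3) by (intro emeasure_UN_eq_0) auto
  ultimately show ?thesis
    unfolding split_null_def using B(2,4) by (intro conjI bexI[of _ "\<Union>n. B n"]) auto
qed

lemma split_null_Un:
  assumes "split_null Q F \<Delta> \<tau> \<xi> k N" "split_null Q F \<Delta> \<tau> \<xi> k N'"
  shows "split_null Q F \<Delta> \<tau> \<xi> k (N \<union> N')"
proof -
  have "(\<Union>n::nat. if n = 0 then N else N') = N \<union> N'" by (auto split: if_splits)
  then show ?thesis using split_null_UN[of Q F \<Delta> \<tau> \<xi> k "\<lambda>n. if n = 0 then N else N'"] assms by simp
qed

lemma split_null_mono:
  assumes "split_null Q F \<Delta> \<tau> \<xi> k N" "k \<le> k'"
  shows "split_null Q F \<Delta> \<tau> \<xi> k' N"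
proof -
  have "Hsig (space Q) \<Delta> \<tau> \<xi> k \<infinity> \<subseteq> Hsig (space Q) \<Delta> \<tau> \<xi> k' \<infinity>"
    unfolding Hsig_def using assms(2) by (intro sigma_sets_mono') fastforce
  then have sub: "sigma_sets (space Q) (Hsig (space Q) \<Delta> \<tau> \<xi> k \<infinity> \<union> Finf (space Q) F)
    \<subseteq> sigma_sets (space Q) (Hsig (space Q) \<Delta> \<tau> \<xi> k' \<infinity> \<union> Finf (space Q) F)"
    by (intro sigma_sets_mono') blast
  then have "Nstar Q F \<Delta> \<tau> \<xi> k \<subseteq> Nstar Q F \<Delta> \<tau> \<xi> k'"
    unfolding Nstar_def nullsig_def by (intro sigma_sets_mono') blast
  then show ?thesis using assms(1) sub unfolding split_null_def by blast
qed

abbreviation Dpaths :: "'e::metric_space \<Rightarrow> nat \<Rightarrow> (nat \<Rightarrow> real \<Rightarrow> 'e) measure" where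
  "Dpaths \<Delta> k \<equiv> PiM {1..k} (\<lambda>_. Dmeas \<Delta>)"

lemma space_Dmeas[simp]: "space (Dmeas \<Delta>) = Dspace \<Delta>"
  unfolding Dmeas_def by (rule space_measure_of_conv)

lemma space_Opt[simp]: "space (Opt \<Omega> G) = {0..} \<times> \<Omega>"
  unfolding Opt_def by (rule space_measure_of_conv)

lemma opt_split_iff:
  fixes Q :: "'a measure" and \<Delta> :: "'e::metric_space"
  shows "opt_split Q F \<Delta> \<tau> \<xi> k \<longleftrightarrow>
    (\<forall>Y \<in> borel_measurable (Opt (space Q) (Gstar Q F \<Delta> \<tau> \<xi> k)).
       \<exists>Ys. (\<forall>i\<le>k. Ys i \<in> borel_measurable (Dpaths \<Delta> k \<Otimes>\<^sub>M Opt (space Q) F)) \<and>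
         (\<exists>N. split_null Q F \<Delta> \<tau> \<xi> k N \<and>
            (\<forall>\<omega>\<in>space Q - N. \<forall>t\<ge>0. \<forall>i\<le>k. sig_interval \<tau> k i \<omega> t \<longrightarrow>
               Y (t, \<omega>) = (Ys i (stopped_paths \<Delta> \<tau> \<xi> k (sig_ord \<tau> k i \<omega>) \<omega>, t, \<omega>) :: real))))"
  unfolding opt_split_def split_null_def stopped_paths_def
  by (simp add: sum_sig_interval_iff Bex_def Ball_def conj_assoc del: upt_Suc)

definition opt_split_param :: "'a measure \<Rightarrow> (real \<Rightarrow> 'a set set) \<Rightarrow> 'e::metric_space \<Rightarrow> (nat \<Rightarrow> 'a \<Rightarrow> ereal)
    \<Rightarrow> (nat \<Rightarrow> 'a \<Rightarrow> 'e) \<Rightarrow> nat \<Rightarrow> ((real \<Rightarrow> 'e) \<times> (real \<times> 'a) \<Rightarrow> real) \<Rightarrow> bool" where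
  "opt_split_param Q F \<Delta> \<tau> \<xi> k u \<longleftrightarrow>
    (\<exists>\<Phi>. (\<forall>i\<le>k. \<Phi> i \<in> borel_measurable (Dmeas \<Delta> \<Otimes>\<^sub>M (Dpaths \<Delta> k \<Otimes>\<^sub>M Opt (space Q) F))) \<and>
      (\<exists>N. split_null Q F \<Delta> \<tau> \<xi> k N \<and>
        (\<forall>\<omega>\<in>space Q - N. \<forall>t\<ge>0. \<forall>x\<in>Dspace \<Delta>. \<forall>i\<le>k. sig_interval \<tau> k i \<omega> t \<longrightarrow>
           u (x, t, \<omega>) = \<Phi> i (x, stopped_paths \<Delta> \<tau> \<xi> k (sig_ord \<tau> k i \<omega>) \<omega>, t, \<omega>))))"

(* Closure under every operation on countable families that preserves measurability: this gives
   the linear, limit and Boolean closure properties needed for the monotone class arguments. *)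
lemma opt_split_param_comb:
  fixes Q :: "'a measure" and F k and h :: "(nat \<Rightarrow> real) \<Rightarrow> real" and \<Delta> :: "'e::metric_space"
  defines "M \<equiv> Dmeas \<Delta> \<Otimes>\<^sub>M (Dpaths \<Delta> k \<Otimes>\<^sub>M Opt (space Q) F)"
  assumes U: "\<And>n. opt_split_param Q F \<Delta> \<tau> \<xi> k (U n)"
    and h: "\<And>\<Phi>. (\<And>n. \<Phi> n \<in> borel_measurable M) \<Longrightarrow> (\<lambda>w. h (\<lambda>n. \<Phi> n w)) \<in> borel_measurable M"
    and v: "\<And>x t \<omega>. x \<in> Dspace \<Delta> \<Longrightarrow> 0 \<le> t \<Longrightarrow> \<omega> \<in> space Q \<Longrightarrow> v (x, t, \<omega>) = h (\<lambda>n. U n (x, t, \<omega>))"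
  shows "opt_split_param Q F \<Delta> \<tau> \<xi> k v"
proof -
  obtain \<Phi> N where \<Phi>: "\<And>n i. i \<le> k \<Longrightarrow> \<Phi> n i \<in> borel_measurable M"
    and N: "\<And>n. split_null Q F \<Delta> \<tau> \<xi> k (N n)"
    and eq: "\<And>n \<omega> t x i. \<omega> \<in> space Q - N n \<Longrightarrow> 0 \<le> t \<Longrightarrow> x \<in> Dspace \<Delta> \<Longrightarrow> i \<le> k \<Longrightarrow>
      sig_interval \<tau> k i \<omega> t \<Longrightarrow> U n (x, t, \<omega>) = \<Phi> n i (x, stopped_paths \<Delta> \<tau> \<xi> k (sig_ord \<tau> k i \<omega>) \<omega>, t, \<omega>)"
    using U unfolding opt_split_param_def M_def by metis
  show ?thesis unfolding opt_split_param_def M_def[symmetric]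
  proof (intro exI[of _ "\<lambda>i w. h (\<lambda>n. \<Phi> n i w)"] conjI exI[of _ "\<Union>n. N n"] allI impI ballI)
    show "(\<lambda>w. h (\<lambda>n. \<Phi> n i w)) \<in> borel_measurable M" if "i \<le> k" for i
      using \<Phi>[OF that] by (rule h)
    show "split_null Q F \<Delta> \<tau> \<xi> k (\<Union>n. N n)" using N by (rule split_null_UN)
  next
    fix \<omega> t x i
    assume "\<omega> \<in> space Q - (\<Union>n. N n)" "0 \<le> t" "x \<in> Dspace \<Delta>" "i \<le> k" "sig_interval \<tau> k i \<omega> t"
    then show "v (x, t, \<omega>) = h (\<lambda>n. \<Phi> n i (x, stopped_paths \<Delta> \<tau> \<xi> k (sig_ord \<tau> k i \<omega>) \<omega>, t, \<omega>))"
      using eq[of \<omega> _ t x i] by (simp add: v)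
  qed
qed

lemma opt_split_param_indicator:
  fixes Q :: "'a measure" and \<Delta> :: "'e::metric_space"
  assumes os: "opt_split Q F \<Delta> \<tau> \<xi> k"
    and S: "S \<in> sets (Dmeas \<Delta> \<Otimes>\<^sub>M Opt (space Q) (Gstar Q F \<Delta> \<tau> \<xi> k))"
  shows "opt_split_param Q F \<Delta> \<tau> \<xi> k (indicator S)"
proof -
  let ?D = "Dmeas \<Delta>" and ?O = "Opt (space Q) (Gstar Q F \<Delta> \<tau> \<xi> k)"
  let ?M = "Dmeas \<Delta> \<Otimes>\<^sub>M (Dpaths \<Delta> k \<Otimes>\<^sub>M Opt (space Q) F)"
  have rect: "opt_split_param Q F \<Delta> \<tau> \<xi> k (indicator (a \<times> b))" if a: "a \<in> sets ?D" and b: "b \<in> sets ?O" for a b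
  proof -
    have "(indicator b :: real \<times> 'a \<Rightarrow> real) \<in> borel_measurable ?O" using b by simp
    then obtain Ys N where Ys: "\<forall>i\<le>k. Ys i \<in> borel_measurable (Dpaths \<Delta> k \<Otimes>\<^sub>M Opt (space Q) F)"
      and N: "split_null Q F \<Delta> \<tau> \<xi> k N"
      and eq: "\<forall>\<omega>\<in>space Q - N. \<forall>t\<ge>0. \<forall>i\<le>k. sig_interval \<tau> k i \<omega> t \<longrightarrow>
        indicator b (t, \<omega>) = (Ys i (stopped_paths \<Delta> \<tau> \<xi> k (sig_ord \<tau> k i \<omega>) \<omega>, t, \<omega>) :: real)"
      using os unfolding opt_split_iff by blast
    show ?thesis unfolding opt_split_param_def
    proof (intro exI[of _ "\<lambda>i w. indicator a (fst w) * Ys i (snd w)"] conjI exI[of _ N] allI impI ballI)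
      fix i assume "i \<le> k"
      then have [measurable]: "Ys i \<in> borel_measurable (Dpaths \<Delta> k \<Otimes>\<^sub>M Opt (space Q) F)" using Ys by blast
      note a[measurable]
      show "(\<lambda>w. indicator a (fst w) * Ys i (snd w)) \<in> borel_measurable ?M" by measurable
    next
      show "split_null Q F \<Delta> \<tau> \<xi> k N" by (fact N)
      fix \<omega> t x i assume "\<omega> \<in> space Q - N" "0 \<le> t" "x \<in> Dspace \<Delta>" "i \<le> k" "sig_interval \<tau> k i \<omega> t"
      then show "indicator (a \<times> b) (x, t, \<omega>) =
          indicator a (fst (x, stopped_paths \<Delta> \<tau> \<xi> k (sig_ord \<tau> k i \<omega>) \<omega>, t, \<omega>))
          * Ys i (snd (x, stopped_paths \<Delta> \<tau> \<xi> k (sig_ord \<tau> k i \<omega>) \<omega>, t, \<omega>))"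
        using eq by (simp add: indicator_times)
    qed
  qed
  have "S \<in> sigma_sets (space ?D \<times> space ?O) {a \<times> b | a b. a \<in> sets ?D \<and> b \<in> sets ?O}"
    using S by (simp only: sets_pair_measure)
  then show ?thesis
  proof (induction rule: sigma_sets.induct)
    case (Basic S)
    then show ?case using rect by blast
  next
    case Empty
    show ?case using rect[OF sets.empty_sets sets.empty_sets] by (simp only: Sigma_empty1)
  next
    case (Compl S)
    show ?case
    proof (rule opt_split_param_comb[where U = "\<lambda>_. indicator S" and h = "\<lambda>f. 1 - f 0"])
      fix \<Phi> :: "nat \<Rightarrow> _ \<Rightarrow> real" assume [measurable]: "\<And>n. \<Phi> n \<in> borel_measurable ?M"
      show "(\<lambda>w. 1 - \<Phi> 0 w) \<in> borel_measurable ?M" by measurable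
    qed (rule Compl.IH, auto simp: indicator_def)
  next
    case (Union A)
    show ?case
    proof (rule opt_split_param_comb[where U = "\<lambda>n. indicator (A n)" and h = "\<lambda>f. if \<exists>n. f n = 1 then 1 else 0"])
      fix \<Phi> :: "nat \<Rightarrow> _ \<Rightarrow> real" assume [measurable]: "\<And>n. \<Phi> n \<in> borel_measurable ?M"
      show "(\<lambda>w. if \<exists>n. \<Phi> n w = 1 then 1 else 0 :: real) \<in> borel_measurable ?M" by measurable
    qed (rule Union.IH, auto simp: indicator_def)
  qed
qed

lemma opt_split_param_measurable:
  fixes Q :: "'a measure" and \<Delta> :: "'e::metric_space"
  assumes os: "opt_split Q F \<Delta> \<tau> \<xi> k"
    and u: "u \<in> borel_measurable (Dmeas \<Delta> \<Otimes>\<^sub>M Opt (space Q) (Gstar Q F \<Delta> \<tau> \<xi> k))"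
  shows "opt_split_param Q F \<Delta> \<tau> \<xi> k u"
proof -
  let ?M = "Dmeas \<Delta> \<Otimes>\<^sub>M (Dpaths \<Delta> k \<Otimes>\<^sub>M Opt (space Q) F)"
  have nonneg: "opt_split_param Q F \<Delta> \<tau> \<xi> k v"
    if "v \<in> borel_measurable (Dmeas \<Delta> \<Otimes>\<^sub>M Opt (space Q) (Gstar Q F \<Delta> \<tau> \<xi> k))" "\<And>z. 0 \<le> v z" for v
    using that
  proof (induction rule: borel_measurable_induct_real)
    case (set A)
    then show ?case by (rule opt_split_param_indicator[OF os])
  next
    case (mult v c)
    show ?case
    proof (rule opt_split_param_comb[where U = "\<lambda>_. v" and h = "\<lambda>f. c * f 0"])
      fix \<Phi> :: "nat \<Rightarrow> _ \<Rightarrow> real" assume [measurable]: "\<And>n. \<Phi> n \<in> borel_measurable ?M"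
      show "(\<lambda>w. c * \<Phi> 0 w) \<in> borel_measurable ?M" by measurable
    qed (use mult in auto)
  next
    case (add v w)
    show ?case
    proof (rule opt_split_param_comb[where U = "\<lambda>n. if n = 0 then w else v" and h = "\<lambda>f. f 0 + f 1"])
      fix \<Phi> :: "nat \<Rightarrow> _ \<Rightarrow> real" assume [measurable]: "\<And>n. \<Phi> n \<in> borel_measurable ?M"
      show "(\<lambda>w. \<Phi> 0 w + \<Phi> 1 w) \<in> borel_measurable ?M" by measurable
    qed (use add in auto)
  next
    case (seq U)
    show ?case
    proof (rule opt_split_param_comb[where U = U and h = lim])
      fix \<Phi> :: "nat \<Rightarrow> _ \<Rightarrow> real" assume [measurable]: "\<And>n. \<Phi> n \<in> borel_measurable ?M"
      show "(\<lambda>w. lim (\<lambda>n. \<Phi> n w)) \<in> borel_measurable ?M" by measurable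
    next
      fix x and t :: real and \<omega> assume "x \<in> Dspace \<Delta>" "0 \<le> t" "\<omega> \<in> space Q"
      then have "(\<lambda>n. U n (x, t, \<omega>)) \<longlonglongrightarrow> v (x, t, \<omega>)"
        by (intro seq.hyps(4)) (simp add: space_pair_measure)
      then show "v (x, t, \<omega>) = lim (\<lambda>n. U n (x, t, \<omega>))" by (simp add: limI)
    qed (use seq in auto)
  qed
  show ?thesis
  proof (rule opt_split_param_comb[where U = "\<lambda>n. if n = 0 then (\<lambda>z. max (u z) 0) else (\<lambda>z. max (- u z) 0)"
        and h = "\<lambda>f. f 0 - f 1"])
    show "opt_split_param Q F \<Delta> \<tau> \<xi> k (if n = 0 then (\<lambda>z. max (u z) 0) else (\<lambda>z. max (- u z) 0))" for n
      using u by (auto intro!: nonneg)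
    fix \<Phi> :: "nat \<Rightarrow> _ \<Rightarrow> real" assume [measurable]: "\<And>n. \<Phi> n \<in> borel_measurable ?M"
    show "(\<lambda>w. \<Phi> 0 w - \<Phi> 1 w) \<in> borel_measurable ?M" by measurable
  qed auto
qed

lemma step_eventually_at_right:
  fixes c :: ereal
  shows "\<forall>\<^sub>F s in at_right t. (c \<le> ereal s) = (c \<le> ereal t)"
proof (cases "c \<le> ereal t")
  case True
  have "c \<le> ereal s" if "t < s" for s
  proof -
    have "ereal t \<le> ereal s" using that by simp
    then show ?thesis using True by (rule order_trans[rotated])
  qed
  then show ?thesis using True unfolding eventually_at_right_field by (intro exI[of _ "t + 1"]) auto
next
  case False
  then obtain z where z: "ereal t < ereal z" "ereal z < c" using ereal_dense2 not_le by metis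
  have "\<not> c \<le> ereal s" if "s < z" for s
  proof -
    have "ereal s < ereal z" using that by simp
    then have "ereal s < c" using z(2) by (rule order.strict_trans)
    then show ?thesis by (simp add: not_le)
  qed
  then show ?thesis using False z(1) unfolding eventually_at_right_field by (intro exI[of _ z]) auto
qed

lemma step_eventually_at_left:
  fixes c :: ereal
  shows "\<exists>P. \<forall>\<^sub>F s in at_left t. (c \<le> ereal s) = P"
proof (cases "c < ereal t")
  case True
  then obtain z where z: "c < ereal z" "ereal z < ereal t" using ereal_dense2 by metis
  have "c \<le> ereal s" if "z < s" for s
  proof -
    have "ereal z < ereal s" using that by simp
    with z(1) have "c < ereal s" by (rule order.strict_trans)
    then show ?thesis by (rule less_imp_le)
  qed
  then have "\<forall>\<^sub>F s in at_left t. (c \<le> ereal s) = True"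
    using z(2) unfolding eventually_at_left_field by (intro exI[of _ z]) auto
  then show ?thesis by blast
next
  case False
  have "\<not> c \<le> ereal s" if "s < t" for s
  proof -
    have "ereal s < ereal t" using that by simp
    moreover have "ereal t \<le> c" using False by (simp add: not_less)
    ultimately have "ereal s < c" by (rule order.strict_trans2)
    then show ?thesis by (simp add: not_le)
  qed
  then have "\<forall>\<^sub>F s in at_left t. (c \<le> ereal s) = False"
    unfolding eventually_at_left_field by (intro exI[of _ "t - 1"]) auto
  then show ?thesis by blast
qed

lemma cadlag_step:
  fixes c :: ereal and a b :: "'e::topological_space"
  shows "cadlag_Rplus (\<lambda>s. if c \<le> ereal s then a else b)"
  unfolding cadlag_Rplus_def
proof (intro conjI allI impI)
  fix t :: real
  have "\<forall>\<^sub>F s in at_right t. (if c \<le> ereal s then a else b) = (if c \<le> ereal t then a else b)"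
    using step_eventually_at_right[of c t] by eventually_elim simp
  then show "continuous (at_right t) (\<lambda>s. if c \<le> ereal s then a else b)"
    unfolding continuous_within by (rule tendsto_eventually)
  obtain P where "\<forall>\<^sub>F s in at_left t. (c \<le> ereal s) = P" using step_eventually_at_left by blast
  then have "\<forall>\<^sub>F s in at_left t. (if c \<le> ereal s then a else b) = (if P then a else b)"
    by eventually_elim simp
  then show "\<exists>l. ((\<lambda>s. if c \<le> ereal s then a else b) \<longlongrightarrow> l) (at_left t)"
    by (blast intro: tendsto_eventually)
qed

lemma const_in_Dspace: "(\<lambda>_. \<Delta>) \<in> Dspace (\<Delta>::'e::metric_space)"
  using cadlag_step[of "\<infinity>" \<Delta> \<Delta>] unfolding Dspace_def by simp

lemma Hproc_in_Dspace:
  fixes \<Delta> :: "'e::metric_space"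
  assumes "0 \<le> \<tau> l \<omega>"
  shows "Hproc \<Delta> \<tau> \<xi> l \<omega> \<in> Dspace \<Delta>"
proof -
  have "\<not> \<tau> l \<omega> \<le> ereal t" if "t < 0" for t
  proof -
    have "ereal t < 0" using that by simp
    then have "ereal t < \<tau> l \<omega>" using assms by (rule order.strict_trans2)
    then show ?thesis by (simp add: not_le)
  qed
  then show ?thesis unfolding Dspace_def Hproc_eq using cadlag_step[of "\<tau> l \<omega>" "\<xi> l \<omega>" \<Delta>] by simp
qed

lemma id_in_skor_Lambda: "(\<lambda>x. x) \<in> skor_Lambda"
  unfolding skor_Lambda_def
proof (intro CollectI conjI)
  show "strict_mono_on {0..} (\<lambda>x::real. x)" by (simp add: strict_mono_on_def)
  show "\<exists>C. C-lipschitz_on {0..} (\<lambda>x::real. x)" using lipschitz_on_id by blast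
  have "{\<bar>ln (((s::real) - t) / (s - t))\<bar> | s t. 0 \<le> t \<and> t < s} \<subseteq> {0}" by auto
  then show "bdd_above {\<bar>ln (((s::real) - t) / (s - t))\<bar> | s t. 0 \<le> t \<and> t < s}"
    by (rule bdd_above_mono[rotated]) simp
qed simp

lemma skor_du_le_1: "skor_du x y l u \<le> 1"
  unfolding skor_du_def by (rule cSup_least) auto

lemma skor_du_ge:
  assumes "0 \<le> t"
  shows "min (dist (x (min t u)) (y (min (l t) u))) 1 \<le> skor_du x y l u"
  unfolding skor_du_def using assms by (intro cSup_upper bdd_aboveI[of _ 1]) auto

lemma skor_dist_const_ge:
  "enn2real (\<integral>\<^sup>+ u. ennreal (exp (- u) * skor_du y (\<lambda>_. c) (\<lambda>x. x) u) * indicator {0..} u \<partial>lborel)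
     \<le> skor_dist y (\<lambda>_. c)"
  unfolding skor_dist_def
proof (rule cInf_greatest)
  show "{max (skor_gamma l) (enn2real (\<integral>\<^sup>+ u. ennreal (exp (- u) * skor_du y (\<lambda>_. c) l u)
      * indicator {0..} u \<partial>lborel)) | l. l \<in> skor_Lambda} \<noteq> {}"
    using id_in_skor_Lambda by blast
qed (auto simp: skor_du_def)

lemma skor_dist_const_pos:
  fixes y :: "real \<Rightarrow> 'e::metric_space"
  assumes "0 \<le> s0" "y s0 \<noteq> c"
  shows "0 < skor_dist y (\<lambda>_. c)"
proof -
  define I where "I = (\<integral>\<^sup>+ u. ennreal (exp (- u) * skor_du y (\<lambda>_. c) (\<lambda>x. x) u) * indicator {0..} u \<partial>lborel)"
  define \<delta> where "\<delta> = min (dist (y s0) c) 1 * exp (- (s0 + 1))"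
  have "0 < \<delta>" using assms(2) by (simp add: \<delta>_def)
  have "I \<le> (\<integral>\<^sup>+ u. ennreal (u ^ 0 * exp (- u)) * indicator {0..} u \<partial>lborel)"
    unfolding I_def using skor_du_le_1
    by (intro nn_integral_mono mult_right_mono ennreal_leI) (auto simp: mult_left_le)
  also have "\<dots> = 1" using nn_intergal_power_times_exp_Ici[of 0] by simp
  finally have "I < \<infinity>" by (simp add: le_less_trans)
  have "ennreal \<delta> = (\<integral>\<^sup>+ u. ennreal \<delta> * indicator {s0..s0+1} u \<partial>lborel)"
    by (simp add: nn_integral_cmult_indicator)
  also have "\<dots> \<le> I" unfolding I_def
  proof (intro nn_integral_mono)
    fix u :: real
    show "ennreal \<delta> * indicator {s0..s0+1} u \<le> ennreal (exp (- u) * skor_du y (\<lambda>_. c) (\<lambda>x. x) u) * indicator {0..} u"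
    proof (cases "u \<in> {s0..s0+1}")
      case True
      have D: "min (dist (y s0) c) 1 \<le> skor_du y (\<lambda>_. c) (\<lambda>x. x) u"
        using skor_du_ge[OF assms(1), where x = y and y = "\<lambda>_. c" and l = "\<lambda>x. x" and u = u] True
        by (simp add: min_absorb1)
      have "0 \<le> skor_du y (\<lambda>_. c) (\<lambda>x. x) u" using D by (rule order_trans[rotated]) simp
      moreover have "exp (- (s0 + 1)) \<le> exp (- u)" using True by simp
      ultimately have "\<delta> \<le> skor_du y (\<lambda>_. c) (\<lambda>x. x) u * exp (- u)"
        unfolding \<delta>_def using D by (intro mult_mono) simp_all
      then have "\<delta> \<le> exp (- u) * skor_du y (\<lambda>_. c) (\<lambda>x. x) u" by (simp only: mult.commute)
      then show ?thesis using True assms(1) by (simp add: ennreal_leI)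
    qed simp
  qed
  finally have "enn2real (ennreal \<delta>) \<le> enn2real I" using \<open>I < \<infinity>\<close> by (intro enn2real_mono) auto
  then have "\<delta> \<le> enn2real I" using \<open>0 < \<delta>\<close> by simp
  then show ?thesis using skor_dist_const_ge[of y c] \<open>0 < \<delta>\<close> unfolding I_def by linarith
qed

lemma const_sets_Dmeas: "{\<lambda>_. \<Delta>} \<in> sets (Dmeas (\<Delta>::'e::metric_space))"
proof -
  let ?G = "{U. U \<subseteq> Dspace \<Delta> \<and> (\<forall>x\<in>U. \<exists>e>0. \<forall>y\<in>Dspace \<Delta>. skor_dist x y < e \<longrightarrow> y \<in> U)}"
  have "Dspace \<Delta> - {\<lambda>_. \<Delta>} \<in> ?G"
  proof (intro CollectI conjI ballI)
    fix x assume x: "x \<in> Dspace \<Delta> - {\<lambda>_. \<Delta>}"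
    then obtain s0 where s0: "x s0 \<noteq> \<Delta>" by auto
    then have "0 \<le> s0" using x unfolding Dspace_def by (metis (mono_tags) DiffD1 mem_Collect_eq not_le)
    show "\<exists>e>0. \<forall>y\<in>Dspace \<Delta>. skor_dist x y < e \<longrightarrow> y \<in> Dspace \<Delta> - {\<lambda>_. \<Delta>}"
      using skor_dist_const_pos[where y = x and c = \<Delta>, OF \<open>0 \<le> s0\<close> s0]
      by (intro exI[of _ "skor_dist x (\<lambda>_. \<Delta>)"]) auto
  qed auto
  then have "Dspace \<Delta> - (Dspace \<Delta> - {\<lambda>_. \<Delta>}) \<in> sigma_sets (Dspace \<Delta>) ?G"
    by (intro sigma_sets.Compl sigma_sets.Basic)
  moreover have "sets (Dmeas \<Delta>) = sigma_sets (Dspace \<Delta>) ?G"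
    unfolding Dmeas_def by (rule sets_measure_of) auto
  ultimately show ?thesis using const_in_Dspace[of \<Delta>] by (simp add: Diff_Diff_Int)
qed

(* The (Suc k)-th path is still identically Delta before tau_(Suc k): then the first k paths and
   the index i feed the splitting of the pre-tau part; afterwards the (Suc k)-th path is the
   parameter of the splitting of the post-tau part, whose index is i - 1. *)
definition split_glue :: "'e \<Rightarrow> nat \<Rightarrow> (nat \<Rightarrow> (nat \<Rightarrow> real \<Rightarrow> 'e) \<times> 'p \<Rightarrow> real)
    \<Rightarrow> (nat \<Rightarrow> (real \<Rightarrow> 'e) \<times> (nat \<Rightarrow> real \<Rightarrow> 'e) \<times> 'p \<Rightarrow> real)
    \<Rightarrow> nat \<Rightarrow> (nat \<Rightarrow> real \<Rightarrow> 'e) \<times> 'p \<Rightarrow> real" where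
  "split_glue \<Delta> k Ys \<Phi> i w =
    (if fst w (Suc k) = (\<lambda>_. \<Delta>) then (if i \<le> k then Ys i (restrict (fst w) {1..k}, snd w) else 0)
     else \<Phi> (i - 1) (fst w (Suc k), restrict (fst w) {1..k}, snd w))"

lemma split_glue_measurable:
  fixes \<Delta> :: "'e::metric_space"
  assumes Ys: "\<forall>i\<le>k. Ys i \<in> borel_measurable (Dpaths \<Delta> k \<Otimes>\<^sub>M M)"
    and \<Phi>: "\<forall>i\<le>k. \<Phi> i \<in> borel_measurable (Dmeas \<Delta> \<Otimes>\<^sub>M (Dpaths \<Delta> k \<Otimes>\<^sub>M M))"
    and "i \<le> Suc k"
  shows "split_glue \<Delta> k Ys \<Phi> i \<in> borel_measurable (Dpaths \<Delta> (Suc k) \<Otimes>\<^sub>M M)"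
proof -
  let ?M = "Dpaths \<Delta> (Suc k) \<Otimes>\<^sub>M M"
  have first: "(\<lambda>w. (restrict (fst w) {1..k}, snd w)) \<in> measurable ?M (Dpaths \<Delta> k \<Otimes>\<^sub>M M)"
    by (intro measurable_Pair measurable_compose[OF measurable_fst measurable_restrict_subset]
        measurable_snd) auto
  have last: "(\<lambda>w. fst w (Suc k)) \<in> measurable ?M (Dmeas \<Delta>)"
    by (rule measurable_compose[OF measurable_fst measurable_component_singleton]) simp
  have \<Phi>i: "\<Phi> (i - 1) \<in> borel_measurable (Dmeas \<Delta> \<Otimes>\<^sub>M (Dpaths \<Delta> k \<Otimes>\<^sub>M M))"
    using \<Phi> \<open>i \<le> Suc k\<close> by simp
  have "(\<lambda>w. if i \<le> k then Ys i (restrict (fst w) {1..k}, snd w) else 0) \<in> borel_measurable ?M"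
  proof (cases "i \<le> k")
    case True
    then show ?thesis using Ys by (auto intro: measurable_compose[OF first])
  qed simp
  moreover from \<Phi>i have "(\<lambda>w. \<Phi> (i - 1) (fst w (Suc k), restrict (fst w) {1..k}, snd w)) \<in> borel_measurable ?M"
    by (rule measurable_compose[OF measurable_Pair[OF last first]])
  moreover have "{w \<in> space ?M. fst w (Suc k) = (\<lambda>_. \<Delta>)} \<in> sets ?M"
    using measurable_sets[OF last const_sets_Dmeas]
    by (simp add: vimage_def Int_def conj_commute)
  ultimately show ?thesis unfolding split_glue_def[abs_def] by (rule measurable_If)
qed

lemma split_glue_eq:
  assumes nn: "\<forall>l\<in>{1..Suc k}. 0 \<le> \<tau> l \<omega>" and \<xi>: "\<xi> (Suc k) \<omega> \<noteq> \<Delta>" and "0 \<le> t"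
    and i: "sig_interval \<tau> (Suc k) i \<omega> t" "i \<le> Suc k"
    and y': "\<And>j. j \<le> k \<Longrightarrow> sig_interval \<tau> k j \<omega> t \<Longrightarrow>
      y' = Ys j (stopped_paths \<Delta> \<tau> \<xi> k (sig_ord \<tau> k j \<omega>) \<omega>, p)"
    and y'': "\<And>j. j \<le> k \<Longrightarrow> sig_interval \<tau> k j \<omega> t \<Longrightarrow>
      y'' = \<Phi> j (Hproc \<Delta> \<tau> \<xi> (Suc k) \<omega>, stopped_paths \<Delta> \<tau> \<xi> k (sig_ord \<tau> k j \<omega>) \<omega>, p)"
  shows "split_glue \<Delta> k Ys \<Phi> i (stopped_paths \<Delta> \<tau> \<xi> (Suc k) (sig_ord \<tau> (Suc k) i \<omega>) \<omega>, p) =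
    (if \<tau> (Suc k) \<omega> \<le> ereal t then y'' else y')"
proof -
  obtain j where j: "sig_interval \<tau> k j \<omega> t" "j \<le> k"
    using sig_interval_exists[OF \<open>0 \<le> t\<close>, where k = k and \<tau> = \<tau> and \<omega> = \<omega>] by blast
  have nnk: "\<forall>l\<in>{1..k}. 0 \<le> \<tau> l \<omega>" using nn by auto
  let ?P = "stopped_paths \<Delta> \<tau> \<xi> (Suc k) (ereal t) \<omega>"
  have "restrict ?P {1..k} = stopped_paths \<Delta> \<tau> \<xi> k (sig_ord \<tau> k j \<omega>) \<omega>"
    unfolding stopped_paths_sig_ord[OF nnk j] by (auto simp: stopped_paths_def fun_eq_iff)
  moreover have "?P (Suc k) = (if \<tau> (Suc k) \<omega> \<le> ereal t then Hproc \<Delta> \<tau> \<xi> (Suc k) \<omega> else (\<lambda>_. \<Delta>))"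
    by (auto simp: stopped_paths_def Hstop_eq Hproc_eq fun_eq_iff)
  moreover have "Hproc \<Delta> \<tau> \<xi> (Suc k) \<omega> \<noteq> (\<lambda>_. \<Delta>)" if "\<tau> (Suc k) \<omega> \<le> ereal t"
    using that \<xi> by (auto simp: Hproc_eq fun_eq_iff)
  moreover have "i = j + (if \<tau> (Suc k) \<omega> \<le> ereal t then 1 else 0)"
    using sig_interval_index[OF i] sig_interval_index[OF j] count_le_Suc[of \<tau> k \<omega> t] by simp
  ultimately show ?thesis
    using j y'[OF j(2,1)] y''[OF j(2,1)] unfolding stopped_paths_sig_ord[OF nn i] split_glue_def by auto
qed

theorem opt_split_Suc:
  fixes Q :: "'a measure" and \<Delta> :: "'e::metric_space"
  assumes nn: "\<forall>\<omega>\<in>space Q. \<forall>l\<in>{1..Suc k}. 0 \<le> \<tau> l \<omega>"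
    and \<xi>: "\<forall>\<omega>\<in>space Q. \<xi> (Suc k) \<omega> \<noteq> \<Delta>"
    and split: "opt_split Q F \<Delta> \<tau> \<xi> k"
    and marked: "opt_split_marked Q F \<Delta> \<tau> \<xi> (Suc k)"
  shows "opt_split Q F \<Delta> \<tau> \<xi> (Suc k)"
  unfolding opt_split_iff
proof
  fix Y :: "real \<times> 'a \<Rightarrow> real"
  assume "Y \<in> borel_measurable (Opt (space Q) (Gstar Q F \<Delta> \<tau> \<xi> (Suc k)))"
  obtain Y' Y'' where Y': "Y' \<in> borel_measurable (Opt (space Q) (Gstar Q F \<Delta> \<tau> \<xi> k))"
    and Y'': "Y'' \<in> borel_measurable (Dmeas \<Delta> \<Otimes>\<^sub>M Opt (space Q) (Gstar Q F \<Delta> \<tau> \<xi> k))"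
    and Y: "\<forall>\<omega>\<in>space Q. \<forall>t\<ge>0. Y (t, \<omega>) = Y' (t, \<omega>) * (if ereal t < \<tau> (Suc k) \<omega> then 1 else 0)
      + Y'' (Hproc \<Delta> \<tau> \<xi> (Suc k) \<omega>, t, \<omega>) * (if \<tau> (Suc k) \<omega> \<le> ereal t then 1 else 0)"
    using marked[unfolded opt_split_marked_def diff_Suc_1, rule_format, OF \<open>Y \<in> _\<close>]
    by (elim bexE) (rule that)
  obtain Ys N1 where Ys: "\<forall>i\<le>k. Ys i \<in> borel_measurable (Dpaths \<Delta> k \<Otimes>\<^sub>M Opt (space Q) F)"
    and N1: "split_null Q F \<Delta> \<tau> \<xi> k N1"
    and Y'_split: "\<forall>\<omega>\<in>space Q - N1. \<forall>t\<ge>0. \<forall>j\<le>k. sig_interval \<tau> k j \<omega> t \<longrightarrow>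
      Y' (t, \<omega>) = Ys j (stopped_paths \<Delta> \<tau> \<xi> k (sig_ord \<tau> k j \<omega>) \<omega>, t, \<omega>)"
    using split Y' unfolding opt_split_iff by blast
  obtain \<Phi> N2 where \<Phi>: "\<forall>i\<le>k. \<Phi> i \<in> borel_measurable (Dmeas \<Delta> \<Otimes>\<^sub>M (Dpaths \<Delta> k \<Otimes>\<^sub>M Opt (space Q) F))"
    and N2: "split_null Q F \<Delta> \<tau> \<xi> k N2"
    and Y''_split: "\<forall>\<omega>\<in>space Q - N2. \<forall>t\<ge>0. \<forall>x\<in>Dspace \<Delta>. \<forall>j\<le>k. sig_interval \<tau> k j \<omega> t \<longrightarrow>
      Y'' (x, t, \<omega>) = \<Phi> j (x, stopped_paths \<Delta> \<tau> \<xi> k (sig_ord \<tau> k j \<omega>) \<omega>, t, \<omega>)"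
    using opt_split_param_measurable[OF split Y''] unfolding opt_split_param_def by blast
  show "\<exists>Ys. (\<forall>i\<le>Suc k. Ys i \<in> borel_measurable (Dpaths \<Delta> (Suc k) \<Otimes>\<^sub>M Opt (space Q) F)) \<and>
    (\<exists>N. split_null Q F \<Delta> \<tau> \<xi> (Suc k) N \<and>
      (\<forall>\<omega>\<in>space Q - N. \<forall>t\<ge>0. \<forall>i\<le>Suc k. sig_interval \<tau> (Suc k) i \<omega> t \<longrightarrow>
        Y (t, \<omega>) = Ys i (stopped_paths \<Delta> \<tau> \<xi> (Suc k) (sig_ord \<tau> (Suc k) i \<omega>) \<omega>, t, \<omega>)))"
  proof (intro exI[of _ "split_glue \<Delta> k Ys \<Phi>"] conjI allI impI exI[of _ "N1 \<union> N2"] ballI)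
    show "split_glue \<Delta> k Ys \<Phi> i \<in> borel_measurable (Dpaths \<Delta> (Suc k) \<Otimes>\<^sub>M Opt (space Q) F)"
      if "i \<le> Suc k" for i using Ys \<Phi> that by (rule split_glue_measurable)
    show "split_null Q F \<Delta> \<tau> \<xi> (Suc k) (N1 \<union> N2)"
      using split_null_mono[OF split_null_Un[OF N1 N2]] by simp
  next
    fix \<omega> t i
    assume \<omega>: "\<omega> \<in> space Q - (N1 \<union> N2)" and "0 \<le> t" and i: "sig_interval \<tau> (Suc k) i \<omega> t" "i \<le> Suc k"
    then have "\<omega> \<in> space Q" "Hproc \<Delta> \<tau> \<xi> (Suc k) \<omega> \<in> Dspace \<Delta>" using nn by (auto intro: Hproc_in_Dspace)
    then have "split_glue \<Delta> k Ys \<Phi> i (stopped_paths \<Delta> \<tau> \<xi> (Suc k) (sig_ord \<tau> (Suc k) i \<omega>) \<omega>, t, \<omega>) =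
      (if \<tau> (Suc k) \<omega> \<le> ereal t then Y'' (Hproc \<Delta> \<tau> \<xi> (Suc k) \<omega>, t, \<omega>) else Y' (t, \<omega>))"
      using nn \<xi> \<omega> \<open>0 \<le> t\<close> Y'_split Y''_split by (intro split_glue_eq i) auto
    then show "Y (t, \<omega>) = split_glue \<Delta> k Ys \<Phi> i (stopped_paths \<Delta> \<tau> \<xi> (Suc k) (sig_ord \<tau> (Suc k) i \<omega>) \<omega>, t, \<omega>)"
      using Y \<open>\<omega> \<in> space Q\<close> \<open>0 \<le> t\<close> by (auto simp: not_less)
  qed
qed

theorem mainTheorem17:
  fixes Q :: "'a measure" and F :: "real \<Rightarrow> 'a set set" and \<Delta> :: "'e::polish_space"
    and \<tau> :: "nat \<Rightarrow> 'a \<Rightarrow> ereal" and \<xi> :: "nat \<Rightarrow> 'a \<Rightarrow> 'e" and m :: nat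
  assumes "prob_space Q"
    and "\<And>t. 0 \<le> t \<Longrightarrow> sigma_algebra (space Q) (F t) \<and> F t \<subseteq> sets Q"
    and "\<And>s t. 0 \<le> s \<Longrightarrow> s \<le> t \<Longrightarrow> F s \<subseteq> F t"
    and "\<And>t. 0 \<le> t \<Longrightarrow> F t = (\<Inter>s\<in>{t<..}. F s)"
    and "nullsig Q (Finf (space Q) F) \<subseteq> F 0"
    and "\<And>j. j \<in> {1..m} \<Longrightarrow> \<tau> j \<in> borel_measurable Q \<and> (\<forall>\<omega>\<in>space Q. 0 \<le> \<tau> j \<omega>)"
    and "\<And>j. j \<in> {1..m} \<Longrightarrow> \<xi> j \<in> borel_measurable Q \<and> (\<forall>\<omega>\<in>space Q. \<xi> j \<omega> \<noteq> \<Delta>)"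
    and "m > 1"
    and "opt_split Q F \<Delta> \<tau> \<xi> (m - 1)"
    and "opt_split_marked Q F \<Delta> \<tau> \<xi> m"
  shows "opt_split Q F \<Delta> \<tau> \<xi> m"
proof -
  obtain k where m: "m = Suc k" using \<open>m > 1\<close> by (cases m) auto
  show ?thesis
    unfolding m
  proof (rule opt_split_Suc)
    show "\<forall>\<omega>\<in>space Q. \<forall>l\<in>{1..Suc k}. 0 \<le> \<tau> l \<omega>" using assms(6) m by blast
    show "\<forall>\<omega>\<in>space Q. \<xi> (Suc k) \<omega> \<noteq> \<Delta>" using assms(7)[of m] m by simp
    show "opt_split Q F \<Delta> \<tau> \<xi> k" using assms(9) m by simp
    show "opt_split_marked Q F \<Delta> \<tau> \<xi> (Suc k)" using assms(10) m by simp
  qed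
qed

end
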